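(* Let $(R,\delta_R^* )$ be an iterative $q$-difference ring which is an integral domain, and let $S\subset R$ be a multiplicatively closed subset with $0\notin S$ and $\sigma_q(S)\subseteq S$. Then there exists a unique iterative $q$-difference operator $\delta_{S^{-1}R}^*$ on $S^{-1}R$ extending $\delta_R^*$.
   Context: Let $C$ be an algebraically closed field and $q\in C$, $q\ne1$. Let $F=C(t)$ with the automorphism $\sigma_q(f(t))=f(qt)$. $\binom{r}{k}_q$ is the value at $q$ of the Gaussian polynomial $\prod_{i=1}^{k}\frac{1-x^{r-i+1}}{1-x^{i}}\in\mathbb Z[x]$. An iterative $q$-difference ring is a commutative $F$-algebra $R$ with a ring automorphism $\sigma_q$ extending that of $F$ together with an iterative $q$-difference operator, i.e. a family $\delta_R^*=(\delta_R^{(k)})_{k\in\mathbb N}$ of maps $R\to R$ such that for all $a,b\in R$, $i,j,k\in\mathbb N$: $\delta_R^{(0)}=\mathrm{id}$; $\delta_R^{(1)}=\frac{\sigma_q-\mathrm{id}}{(q-1)t}$; $\delta_R^{(k)}$ is additive; $\delta_R^{(k)}(ab)=\sum_{i+j=k}\sigma_q^i(\delta_R^{(j)}(a))\delta_R^{(i)}(b)$; $\delta_R^{(i)}\circ\delta_R^{(j)}=\binom{i+j}{i}_q\delta_R^{(i+j)}$. (On $S^{-1}R$, $\sigma_q$ is extended by $\sigma_q(a/s)=\sigma_q(a)/\sigma_q(s)$.) *)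

theory Defs
  imports "HOL-Computational_Algebra.Polynomial" "HOL-Computational_Algebra.Fraction_Field"
begin

definition alg_closed :: "('c::field) itself \<Rightarrow> bool" where
  "alg_closed _ \<longleftrightarrow> (\<forall>p::'c poly. degree p > 0 \<longrightarrow> (\<exists>x. poly p x = 0))"

text \<open>The Gaussian polynomial prod_{i=1}^k (1 - x^(r-i+1)) / (1 - x^i) in Z[x]
  (the division is exact) and its value at q.\<close>
definition gauss_poly :: "nat \<Rightarrow> nat \<Rightarrow> int poly" where
  "gauss_poly r k = (\<Prod>i=1..k. 1 - monom 1 (r - i + 1)) div (\<Prod>i=1..k. 1 - monom 1 i)"

definition qbinom :: "nat \<Rightarrow> nat \<Rightarrow> 'c::field \<Rightarrow> 'c" where
  "qbinom r k q = poly (map_poly of_int (gauss_poly r k)) q"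

type_synonym 'c ratfun = "'c poly fract"

definition tvar :: "'c::field ratfun" where
  "tvar = Fract [:0, 1:] 1"

definition sigmaF :: "'c::field \<Rightarrow> 'c ratfun \<Rightarrow> 'c ratfun" where
  "sigmaF q f = (SOME g. \<exists>a b. b \<noteq> 0 \<and> f = Fract a b \<and>
                      g = Fract (pcompose a [:0, q:]) (pcompose b [:0, q:]))"

definition ring_hom_fun :: "('a::comm_ring_1 \<Rightarrow> 'b::comm_ring_1) \<Rightarrow> bool" where
  "ring_hom_fun f \<longleftrightarrow> f 1 = 1 \<and> (\<forall>x y. f (x + y) = f x + f y) \<and> (\<forall>x y. f (x * y) = f x * f y)"

definition ring_aut :: "('a::comm_ring_1 \<Rightarrow> 'a) \<Rightarrow> bool" where
  "ring_aut f \<longleftrightarrow> ring_hom_fun f \<and> bij f"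

definition iter_qdiff_op ::
  "'c::field \<Rightarrow> ('c ratfun \<Rightarrow> 'a::comm_ring_1) \<Rightarrow> ('a \<Rightarrow> 'a) \<Rightarrow> 'a set \<Rightarrow> (nat \<Rightarrow> 'a \<Rightarrow> 'a) \<Rightarrow> bool" where
  "iter_qdiff_op q \<iota> \<sigma> A \<delta> \<longleftrightarrow>
     (\<forall>k. \<forall>a\<in>A. \<delta> k a \<in> A) \<and>
     (\<forall>a\<in>A. \<delta> 0 a = a) \<and>
     (\<forall>a\<in>A. \<delta> 1 a = \<iota> (inverse (Fract [:q - 1:] 1 * tvar)) * (\<sigma> a - a)) \<and>
     (\<forall>k. \<forall>a\<in>A. \<forall>b\<in>A. \<delta> k (a + b) = \<delta> k a + \<delta> k b) \<and>
     (\<forall>k. \<forall>a\<in>A. \<forall>b\<in>A. \<delta> k (a * b) = (\<Sum>i\<le>k. (\<sigma> ^^ i) (\<delta> (k - i) a) * \<delta> i b)) \<and>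
     (\<forall>i j. \<forall>a\<in>A. \<delta> i (\<delta> j a) = \<iota> (Fract [:qbinom (i + j) i q:] 1) * \<delta> (i + j) a)"

definition iter_qdiff_ring ::
  "'c::field \<Rightarrow> ('c ratfun \<Rightarrow> 'r::comm_ring_1) \<Rightarrow> ('r \<Rightarrow> 'r) \<Rightarrow> (nat \<Rightarrow> 'r \<Rightarrow> 'r) \<Rightarrow> bool" where
  "iter_qdiff_ring q \<iota> \<sigma> \<delta> \<longleftrightarrow> ring_hom_fun \<iota> \<and> ring_aut \<sigma> \<and>
     (\<forall>f. \<sigma> (\<iota> f) = \<iota> (sigmaF q f)) \<and> iter_qdiff_op q \<iota> \<sigma> UNIV \<delta>"

definition mult_closed :: "'a::comm_ring_1 set \<Rightarrow> bool" where
  "mult_closed S \<longleftrightarrow> 1 \<in> S \<and> (\<forall>x\<in>S. \<forall>y\<in>S. x * y \<in> S)"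

text \<open>For an integral domain R and 0 \<notin> S, the localization S^{-1}R is realised
  as the subring {a/s} of the fraction field of R.\<close>
definition loc :: "'r::idom set \<Rightarrow> 'r fract set" where
  "loc S = {Fract a s | a s. s \<in> S}"

definition loc_sigma :: "('r::idom \<Rightarrow> 'r) \<Rightarrow> 'r fract \<Rightarrow> 'r fract" where
  "loc_sigma \<sigma> x = (SOME y. \<exists>a s. s \<noteq> 0 \<and> x = Fract a s \<and> y = Fract (\<sigma> a) (\<sigma> s))"

definition loc_iota :: "('c ratfun \<Rightarrow> 'r::idom) \<Rightarrow> 'c ratfun \<Rightarrow> 'r fract" where
  "loc_iota \<iota> f = Fract (\<iota> f) 1"

end

theory Submission
  imports Defs "HOL-Computational_Algebra.Primes"
begin

text \<open>Write \<open>x \<in> S\<inverse>R\<close> as \<open>a / s\<close>. Applied to \<open>x s = a\<close>, the Leibniz rule forces the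
  sequence \<open>u = (\<delta>\<^sub>k x)\<^sub>k\<close> to satisfy \<open>u \<star> \<Phi>(s) = \<Phi>(a)\<close>, where \<open>\<Phi>(b) = (\<delta>\<^sub>k b)\<^sub>k\<close> and
  \<open>\<star>\<close> is a twisted convolution (multiplication in a skew power series ring). As
  \<open>\<Phi>(s)\<^sub>0 = s\<close> is invertible, this determines \<open>u\<close>: uniqueness follows, and solving the equation
  defines the extension. Multiplicativity of \<open>\<Phi>\<close> and associativity of \<open>\<star>\<close> give additivity
  and the Leibniz rule on \<open>S\<inverse>R\<close>, and the commutation \<open>\<delta>\<^sub>k \<circ> \<sigma> = q\<^sup>k \<sigma> \<circ> \<delta>\<^sub>k\<close>, derived in
  \<open>R\<close>, transfers as well. Iterativity is proved by induction on \<open>i + j\<close>, expanding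
  \<open>\<delta>\<^sub>i (\<delta>\<^sub>j (x s))\<close> by the iterated Leibniz rule; the coefficients that appear are summed by a
  q-Vandermonde identity, which is itself read off in \<open>R\<close> from the action of \<open>\<delta>\<close> on powers
  of \<open>(q - 1) t\<close>.\<close>

lemma sum_eq_single:
  assumes "finite A" "a \<in> A" "\<And>i. i \<in> A \<Longrightarrow> i \<noteq> a \<Longrightarrow> f i = 0"
  shows "sum f A = f a"
  using assms by (subst sum.remove[of A a]) (auto intro: sum.neutral)

lemma sum_eq_pair:
  assumes "finite A" "a \<in> A" "b \<in> A" "a \<noteq> b"
    and "\<And>i. i \<in> A \<Longrightarrow> i \<noteq> a \<Longrightarrow> i \<noteq> b \<Longrightarrow> f i = 0"
  shows "sum f A = f a + f b"
proof -
  have "sum f (A - {a}) = f b" by (rule sum_eq_single) (use assms in auto)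
  then show ?thesis using assms by (simp add: sum.remove)
qed

lemma sum_atMost_atMost_by_total_degree:
  fixes i j :: nat
  shows "(\<Sum>l\<le>i. \<Sum>m\<le>j. f l m) = (\<Sum>n\<le>i + j. \<Sum>l | l \<le> i \<and> l \<le> n \<and> n - l \<le> j. f l (n - l))"
proof -
  have "(\<Sum>l\<le>i. \<Sum>m\<le>j. f l m) = (\<Sum>(l, m)\<in>{..i} \<times> {..j}. f l m)"
    by (simp add: sum.cartesian_product)
  also have "\<dots> = (\<Sum>(n, l)\<in>Sigma {..i + j} (\<lambda>n. {l. l \<le> i \<and> l \<le> n \<and> n - l \<le> j}). f l (n - l))"
    by (rule sum.reindex_bij_witness[where i="\<lambda>(n, l). (l, n - l)" and j="\<lambda>(l, m). (l + m, l)"]) auto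
  also have "\<dots> = (\<Sum>n\<le>i + j. \<Sum>l | l \<le> i \<and> l \<le> n \<and> n - l \<le> j. f l (n - l))"
    by (rule sum.Sigma[symmetric]) auto
  finally show ?thesis .
qed

lemma sum_atMost_triangle:
  "(\<Sum>i\<le>k. \<Sum>j\<le>k - i. g i j) = (\<Sum>n\<le>(k::nat). \<Sum>i\<le>n. g i (n - i))"
proof -
  have "(\<Sum>i\<le>k. \<Sum>j\<le>k - i. g i j) = (\<Sum>(i, j)\<in>Sigma {..k} (\<lambda>i. {..k - i}). g i j)"
    by (rule sum.Sigma) auto
  also have "Sigma {..k} (\<lambda>i. {..k - i}) = {(i, j). i + j \<le> k}" by auto
  finally show ?thesis by (simp only: sum.triangle_reindex_eq)
qed

lemma double_sum_eq_imp_eq_at_0: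
  fixes F G :: "nat \<Rightarrow> nat \<Rightarrow> 'a::ab_group_add"
  assumes "(\<Sum>l\<le>i. \<Sum>m\<le>j. F l m) = (\<Sum>l\<le>i. \<Sum>m\<le>j. G l m)"
    and "\<And>l m. l \<le> i \<Longrightarrow> m \<le> j \<Longrightarrow> 0 < l + m \<Longrightarrow> F l m = G l m"
  shows "F 0 0 = G 0 0"
proof -
  have inner: "(\<Sum>m\<le>j. F l m - G l m) = F l 0 - G l 0" if "l \<le> i" for l
    by (rule sum_eq_single) (use that assms(2) in auto)
  have "0 = (\<Sum>l\<le>i. \<Sum>m\<le>j. F l m - G l m)"
    using assms(1) by (simp add: sum_subtractf)
  also have "\<dots> = (\<Sum>l\<le>i. F l 0 - G l 0)" using inner by (intro sum.cong) auto
  also have "\<dots> = F 0 0 - G 0 0" by (rule sum_eq_single) (use assms(2) in auto)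
  finally show ?thesis by simp
qed

lemma ring_hom_fun_simps:
  assumes "ring_hom_fun f"
  shows "f 1 = 1" "f (x + y) = f x + f y" "f (x * y) = f x * f y" "f 0 = 0"
    "f (- x) = - f x" "f (x - y) = f x - f y" "f (x ^ n) = f x ^ n"
    "f (sum g A) = (\<Sum>a\<in>A. f (g a))" "f (of_nat n) = of_nat n"
proof -
  have add: "\<And>x y. f (x + y) = f x + f y" and mult: "\<And>x y. f (x * y) = f x * f y"
    and one: "f 1 = 1" using assms by (simp_all add: ring_hom_fun_def)
  have zero: "f 0 = 0" using add[of 0 0] by simp
  have minus: "\<And>x. f (- x) = - f x" using add zero by (metis add.right_inverse minus_unique)
  show "f 1 = 1" "f (x + y) = f x + f y" "f (x * y) = f x * f y" "f 0 = 0" "f (- x) = - f x"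
    by (fact one add mult zero minus)+
  show "f (x - y) = f x - f y" using add[of x "- y"] minus by simp
  show "f (x ^ n) = f x ^ n" by (induction n) (simp_all add: one mult)
  show "f (sum g A) = (\<Sum>a\<in>A. f (g a))"
    by (induction A rule: infinite_finite_induct) (simp_all add: zero add)
  show "f (of_nat n) = of_nat n" by (induction n) (simp_all add: zero one add)
qed

lemma ring_hom_fun_funpow:
  fixes f :: "'a::comm_ring_1 \<Rightarrow> 'a"
  shows "ring_hom_fun f \<Longrightarrow> ring_hom_fun (f ^^ n)"
  by (induction n) (simp_all add: ring_hom_fun_def)

lemma ring_hom_fun_comp: "ring_hom_fun f \<Longrightarrow> ring_hom_fun g \<Longrightarrow> ring_hom_fun (f \<circ> g)"
  by (simp add: ring_hom_fun_def)

lemma ring_hom_fun_Fract_const: "ring_hom_fun (\<lambda>c::'a::field. Fract [:c:] 1)"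
  by (simp add: ring_hom_fun_def One_fract_def one_pCons mult.commute)

lemma funpow_fixed_point: "f x = x \<Longrightarrow> (f ^^ n) x = x"
  by (induction n) simp_all

lemma ring_aut_nonzero: "ring_aut f \<Longrightarrow> x \<noteq> 0 \<Longrightarrow> f x \<noteq> 0"
  unfolding ring_aut_def bij_def by (metis injD ring_hom_fun_simps(4))

lemma ring_hom_fun_field_nonzero:
  fixes f :: "'a::field \<Rightarrow> 'b::idom"
  assumes "ring_hom_fun f" "x \<noteq> 0"
  shows "f x \<noteq> 0"
  using ring_hom_fun_simps(3)[OF assms(1), of x "inverse x"] ring_hom_fun_simps(1)[OF assms(1)]
    assms(2) by auto

lemma sigmaF_Fract:
  fixes q :: "'c::field"
  assumes "q \<noteq> 0" and "b \<noteq> 0"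
  shows "sigmaF q (Fract a b) = Fract (pcompose a [:0, q:]) (pcompose b [:0, q:])"
proof -
  let ?p = "[:0, q:]"
  have nz: "c \<noteq> 0 \<Longrightarrow> pcompose c ?p \<noteq> 0" for c :: "'c poly"
    using pcompose_eq_0[of c ?p] assms(1) by auto
  show ?thesis unfolding sigmaF_def
  proof (rule someI2)
    fix g assume "\<exists>a' b'. b' \<noteq> 0 \<and> Fract a b = Fract a' b' \<and>
      g = Fract (pcompose a' ?p) (pcompose b' ?p)"
    then obtain a' b' where b': "b' \<noteq> 0" and "Fract a b = Fract a' b'"
      and g: "g = Fract (pcompose a' ?p) (pcompose b' ?p)" by blast
    then have "pcompose (a * b') ?p = pcompose (a' * b) ?p" using assms(2) by (simp add: eq_fract)
    then show "g = Fract (pcompose a ?p) (pcompose b ?p)"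
      using g nz[OF b'] nz[OF assms(2)] by (simp add: eq_fract pcompose_mult mult.commute)
  qed (use assms(2) in blast)
qed

text \<open>In characteristic \<open>p\<close> a relation \<open>q ^ (p * j) = 1\<close> descends to \<open>q ^ j = 1\<close>,
  because \<open>(q ^ j - 1) ^ p = q ^ (p * j) - 1\<close>.\<close>
lemma power_eq_1_imp_order_nonzero:
  fixes q :: "'c::field"
  assumes "q ^ j = 1" "j > 0"
  shows "\<exists>m>0. q ^ m = 1 \<and> of_nat m \<noteq> (0::'c)"
  using assms
proof (induction j rule: less_induct)
  case (less j)
  show ?case
  proof (cases "of_nat j = (0::'c)")
    case True
    define p where "p = CHAR('c)"
    have "p dvd j" using True by (simp add: p_def of_nat_eq_0_iff_char_dvd)
    moreover have p: "prime p"
      unfolding p_def using True less.prems(2) CHAR_pos_iff by (blast intro: prime_CHAR_semidom)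
    ultimately obtain j' where j: "j = p * j'" by (auto elim: dvdE)
    have "j' > 0" "j' < j" using j less.prems(2) prime_gt_1_nat[OF p] by (auto intro: gr0I)
    have "(q ^ j' + - 1) ^ p = (q ^ j') ^ p + (- 1) ^ p"
      using p by (intro freshmans_dream) (simp_all add: p_def)
    also have "\<dots> = 0"
      using less.prems(1) p by (simp add: j minus_power_prime_CHAR p_def power_mult[symmetric] mult.commute)
    finally have "q ^ j' = 1" by simp
    then show ?thesis using less.IH[OF \<open>j' < j\<close>] \<open>j' > 0\<close> by blast
  qed (use less.prems in blast)
qed

section \<open>Gaussian binomial coefficients\<close>

lemma monom_1_1_power: "monom (1::'a::comm_semiring_1) 1 ^ i = monom 1 i"
  by (simp add: monom_power)

lemma gauss_poly_1:
  assumes "r > 0"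
  shows "gauss_poly r 1 = (\<Sum>i<r. monom 1 i)"
proof -
  have "(1 - monom 1 r :: int poly) = (1 - monom 1 1) * (\<Sum>i<r. monom 1 i)"
    using one_diff_power_eq[of "monom (1::int) 1" r] unfolding monom_1_1_power .
  moreover have "(1 :: int poly) - monom 1 1 \<noteq> 0" by (simp add: monom_eq_1_iff)
  ultimately show ?thesis using assms by (simp add: gauss_poly_def)
qed

lemma gauss_poly_Suc_diag: "gauss_poly (Suc n) n = (\<Sum>i<Suc n. monom 1 i)"
proof -
  define f where "f i = (1 :: int poly) - monom 1 i" for i
  have f_nz: "i \<noteq> 0 \<Longrightarrow> f i \<noteq> 0" for i by (simp add: f_def monom_eq_1_iff)
  have "(\<Prod>i=1..n. 1 - monom 1 (Suc n - i + 1)) = (\<Prod>i=2..Suc n. f i)"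
    unfolding f_def
    by (rule prod.reindex_bij_witness[where i="\<lambda>j. n + 2 - j" and j="\<lambda>i. n + 2 - i"])
       (auto simp: Suc_diff_le)
  also have "\<dots> = (\<Prod>i=1..n. f i) * (\<Sum>i<Suc n. monom 1 i)"
  proof (cases n)
    case (Suc m)
    have "f (Suc n) = f 1 * (\<Sum>i<Suc n. monom 1 i)"
      using one_diff_power_eq[of "monom (1::int) 1" "Suc n"] unfolding f_def monom_1_1_power .
    moreover have "(\<Prod>i=1..n. f i) = f 1 * (\<Prod>i=2..n. f i)"
      using Suc by (simp add: prod.atLeast_Suc_atMost numeral_2_eq_2)
    ultimately show ?thesis using Suc by (simp add: mult_ac)
  qed (simp add: f_def)
  finally show ?thesis
    using f_nz by (simp add: gauss_poly_def f_def prod_zero_iff)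
qed

lemma poly_of_int_geometric:
  "poly (map_poly of_int (\<Sum>i<n. monom 1 i)) (q::'c::field) = (\<Sum>i<n. q ^ i)"
proof -
  have "map_poly (of_int :: int \<Rightarrow> 'c) (\<Sum>i<n. monom 1 i) = (\<Sum>i<n. monom 1 i)"
    by (rule poly_eqI) (simp add: coeff_map_poly coeff_sum coeff_monom of_int_sum[symmetric] if_distrib
        cong: if_cong)
  then show ?thesis by (simp add: poly_sum poly_monom)
qed

lemma qbinom_0 [simp]: "qbinom r 0 q = 1"
  by (simp add: qbinom_def gauss_poly_def)

lemma qbinom_Suc_1: "qbinom (Suc k) 1 q = (\<Sum>i<Suc k. q ^ i)"
  unfolding qbinom_def gauss_poly_1[OF zero_less_Suc] by (rule poly_of_int_geometric)

lemma qbinom_Suc_diag: "qbinom (Suc k) k q = (\<Sum>i<Suc k. q ^ i)"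
  unfolding qbinom_def gauss_poly_Suc_diag by (rule poly_of_int_geometric)

section \<open>Iterative q-difference rings\<close>

lemma twisted_leibniz_iterate:
  fixes d :: "nat \<Rightarrow> 'a::comm_ring_1 \<Rightarrow> 'a" and s :: "'a \<Rightarrow> 'a"
  assumes s_hom: "ring_hom_fun s" and s_Q: "s Q = Q"
    and A: "0 \<in> A" "\<And>x y. x \<in> A \<Longrightarrow> y \<in> A \<Longrightarrow> x + y \<in> A"
      "\<And>x y. x \<in> A \<Longrightarrow> y \<in> A \<Longrightarrow> x * y \<in> A" "\<And>x. x \<in> A \<Longrightarrow> s x \<in> A"
      "\<And>k x. x \<in> A \<Longrightarrow> d k x \<in> A"
    and add: "\<And>k x y. x \<in> A \<Longrightarrow> y \<in> A \<Longrightarrow> d k (x + y) = d k x + d k y"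
    and leibniz: "\<And>k x y. x \<in> A \<Longrightarrow> y \<in> A \<Longrightarrow>
      d k (x * y) = (\<Sum>i\<le>k. (s ^^ i) (d (k - i) x) * d i y)"
    and commute: "\<And>k x. x \<in> A \<Longrightarrow> d k (s x) = Q ^ k * s (d k x)"
    and x: "x \<in> A" and y: "y \<in> A"
  shows "d i (d j (x * y)) =
    (\<Sum>l\<le>i. \<Sum>m\<le>j. Q ^ (m * (i - l)) * (s ^^ (l + m)) (d (i - l) (d (j - m) x)) * d l (d m y))"
proof -
  note s_simps = ring_hom_fun_simps[OF ring_hom_fun_funpow[OF s_hom]]
  have d_0: "d k 0 = 0" for k
    using add[OF A(1) A(1), of k] by (simp only: add_0_right add_cancel_right_right)
  have sum_A: "finite M \<Longrightarrow> (\<And>m. m \<in> M \<Longrightarrow> f m \<in> A) \<Longrightarrow> sum f M \<in> A" for M and f :: "nat \<Rightarrow> 'a"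
    by (induction M rule: finite_induct) (auto intro: A)
  have d_sum: "finite M \<Longrightarrow> (\<And>m. m \<in> M \<Longrightarrow> f m \<in> A) \<Longrightarrow> d k (sum f M) = (\<Sum>m\<in>M. d k (f m))"
    for M k and f :: "nat \<Rightarrow> 'a"
    by (induction M rule: finite_induct) (auto simp: add sum_A d_0)
  have s_pow_A: "z \<in> A \<Longrightarrow> (s ^^ n) z \<in> A" for n z by (induction n) (auto intro: A)
  have s_pow_Q: "(s ^^ n) Q = Q" for n by (rule funpow_fixed_point[of s Q, OF s_Q])
  have commute_pow: "z \<in> A \<Longrightarrow> d k ((s ^^ m) z) = Q ^ (m * k) * (s ^^ m) (d k z)" for k m z
  proof (induction m)
    case (Suc m)
    then show ?case
      using commute[OF s_pow_A[OF Suc.prems, of m], of k]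
      by (simp add: ring_hom_fun_simps[OF s_hom] s_Q power_add mult_ac)
  qed simp
  have "d i (d j (x * y)) = (\<Sum>m\<le>j. d i ((s ^^ m) (d (j - m) x) * d m y))"
    using x y by (simp add: leibniz) (intro d_sum, auto intro: A s_pow_A)
  also have "\<dots> = (\<Sum>m\<le>j. \<Sum>l\<le>i. Q ^ (m * (i - l)) * (s ^^ (l + m)) (d (i - l) (d (j - m) x)) * d l (d m y))"
    using x y by (intro sum.cong refl)
      (simp add: leibniz A s_pow_A commute_pow s_simps s_pow_Q funpow_add mult.assoc)
  finally show ?thesis by (simp only: sum.swap[of _ "{..j}"])
qed

declare One_nat_def [simp del]

locale q_difference_ring =
  fixes q :: "'c::field" and \<iota> :: "'c ratfun \<Rightarrow> 'r::idom" and \<sigma> :: "'r \<Rightarrow> 'r"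
    and \<delta> :: "nat \<Rightarrow> 'r \<Rightarrow> 'r"
  assumes q_neq_0: "q \<noteq> 0" and q_neq_1: "q \<noteq> 1" and qdiff_ring: "iter_qdiff_ring q \<iota> \<sigma> \<delta>"
begin

lemma iota_hom: "ring_hom_fun \<iota>" and sigma_aut: "ring_aut \<sigma>"
  and sigma_iota: "\<sigma> (\<iota> f) = \<iota> (sigmaF q f)" and qdiff_op: "iter_qdiff_op q \<iota> \<sigma> UNIV \<delta>"
  using qdiff_ring by (simp_all add: iter_qdiff_ring_def)

lemma sigma_funpow_hom: "ring_hom_fun (\<sigma> ^^ n)"
  using sigma_aut by (simp add: ring_aut_def ring_hom_fun_funpow)

lemma sigma_hom: "ring_hom_fun \<sigma>"
  using sigma_funpow_hom[of 1] by (simp add: One_nat_def)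

lemmas iota_simps = ring_hom_fun_simps[OF iota_hom]
lemmas sigma_simps = ring_hom_fun_simps[OF sigma_hom]
lemmas sigma_funpow_simps = ring_hom_fun_simps[OF sigma_funpow_hom]

definition const :: "'c \<Rightarrow> 'r" where "const c = \<iota> (Fract [:c:] 1)"

lemma const_hom: "ring_hom_fun const"
proof -
  have "const = \<iota> \<circ> (\<lambda>c. Fract [:c:] 1)" by (simp add: fun_eq_iff const_def)
  then show ?thesis using ring_hom_fun_comp[OF iota_hom ring_hom_fun_Fract_const] by simp
qed

lemmas const_simps = ring_hom_fun_simps[OF const_hom]

lemma const_nonzero: "c \<noteq> 0 \<Longrightarrow> const c \<noteq> 0"
  by (rule ring_hom_fun_field_nonzero[OF const_hom])

lemma sigma_const [simp]: "\<sigma> (const c) = const c"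
  by (simp add: const_def sigma_iota sigmaF_Fract q_neq_0 pcompose_1)

lemma sigma_funpow_const [simp]: "(\<sigma> ^^ n) (const c) = const c"
  by (simp add: funpow_fixed_point)

definition tau :: 'r where "tau = \<iota> (Fract [:q - 1:] 1 * tvar)"

lemma sigma_tau: "\<sigma> tau = const q * tau"
  by (simp add: tau_def const_def tvar_def sigma_iota sigmaF_Fract q_neq_0 iota_simps(3)[symmetric]
      pcompose_pCons pcompose_1 mult.commute)

lemma sigma_funpow_tau: "(\<sigma> ^^ n) tau = const q ^ n * tau"
  by (induction n) (simp_all add: sigma_tau sigma_simps)

lemma delta_0 [simp]: "\<delta> 0 a = a"
  and delta_add: "\<delta> k (a + b) = \<delta> k a + \<delta> k b"
  and delta_mult: "\<delta> k (a * b) = (\<Sum>i\<le>k. (\<sigma> ^^ i) (\<delta> (k - i) a) * \<delta> i b)"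
  and delta_delta: "\<delta> i (\<delta> j a) = const (qbinom (i + j) i q) * \<delta> (i + j) a"
  using qdiff_op by (simp_all add: iter_qdiff_op_def const_def)

lemma delta_1_eq: "\<delta> 1 a = \<iota> (inverse (Fract [:q - 1:] 1 * tvar)) * (\<sigma> a - a)"
  using qdiff_op by (simp add: iter_qdiff_op_def)

lemma inverse_tau: "\<iota> (inverse (Fract [:q - 1:] 1 * tvar)) * tau = 1"
proof -
  let ?f = "Fract [:q - 1:] 1 * tvar :: 'c ratfun"
  have "?f \<noteq> 0" using q_neq_1 by (simp add: tvar_def eq_fract Zero_fract_def)
  have "\<iota> (inverse ?f) * tau = \<iota> (inverse ?f * ?f)" by (simp only: tau_def iota_simps(3))
  also have "\<dots> = 1" by (simp only: left_inverse[OF \<open>?f \<noteq> 0\<close>] iota_simps(1))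
  finally show ?thesis .
qed

lemma tau_nonzero: "tau \<noteq> 0"
  using inverse_tau by auto

lemma sigma_eq_delta_1: "\<sigma> a = a + tau * \<delta> 1 a"
proof -
  have "tau * \<delta> 1 a = (\<iota> (inverse (Fract [:q - 1:] 1 * tvar)) * tau) * (\<sigma> a - a)"
    by (simp only: delta_1_eq mult_ac)
  also have "\<dots> = \<sigma> a - a" by (simp only: inverse_tau mult_1_left)
  finally show ?thesis by simp
qed

lemma delta_zero [simp]: "\<delta> k 0 = 0"
  using delta_add[of k 0 0] by (simp only: add_0_right add_cancel_right_right)

lemma delta_minus: "\<delta> k (- a) = - \<delta> k a"
  using delta_add[of k a "- a"] by (simp add: eq_neg_iff_add_eq_0 add.commute)

lemma delta_diff: "\<delta> k (a - b) = \<delta> k a - \<delta> k b"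
  using delta_add[of k a "- b"] by (simp add: delta_minus)

lemma delta_1_mult: "\<delta> 1 (a * b) = \<delta> 1 a * b + \<sigma> a * \<delta> 1 b"
  by (simp add: delta_mult One_nat_def)

lemma delta_mult_gap:
  assumes "0 < k" and "\<And>i. 0 < i \<Longrightarrow> i < k \<Longrightarrow> \<delta> (k - i) a = 0 \<or> \<delta> i b = 0"
  shows "\<delta> k (a * b) = \<delta> k a * b + (\<sigma> ^^ k) a * \<delta> k b"
proof -
  have "\<delta> k (a * b) = (\<sigma> ^^ 0) (\<delta> (k - 0) a) * \<delta> 0 b + (\<sigma> ^^ k) (\<delta> (k - k) a) * \<delta> k b"
    unfolding delta_mult
  proof (intro sum_eq_pair)
    fix i assume "i \<in> {..k}" "i \<noteq> 0" "i \<noteq> k"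
    then have "\<delta> (k - i) a = 0 \<or> \<delta> i b = 0" using assms(2) by auto
    then show "(\<sigma> ^^ i) (\<delta> (k - i) a) * \<delta> i b = 0" by (auto simp: sigma_funpow_simps)
  qed (use assms(1) in auto)
  then show ?thesis by simp
qed

lemma delta_one: "0 < k \<Longrightarrow> \<delta> k 1 = 0"
proof (induction k rule: less_induct)
  case (less k)
  have "\<delta> k (1 * 1) = \<delta> k 1 * 1 + (\<sigma> ^^ k) 1 * \<delta> k 1"
    using less by (intro delta_mult_gap) auto
  then have "\<delta> k 1 + 0 = \<delta> k 1 + \<delta> k 1"
    by (simp only: mult_1_left mult_1_right sigma_funpow_simps(1) add_0_right)
  then show ?case by (rule add_left_imp_eq[THEN sym])
qed

lemma delta_1_delta: "\<delta> 1 (\<delta> k a) = const (\<Sum>i<Suc k. q ^ i) * \<delta> (Suc k) a"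
  and delta_delta_1: "\<delta> k (\<delta> 1 a) = const (\<Sum>i<Suc k. q ^ i) * \<delta> (Suc k) a"
  using delta_delta[of 1 k a] delta_delta[of k 1 a]
  by (simp_all only: plus_1_eq_Suc Suc_eq_plus1[symmetric] qbinom_Suc_1 qbinom_Suc_diag)

lemma delta_1_delta_commute: "\<delta> 1 (\<delta> k a) = \<delta> k (\<delta> 1 a)"
  unfolding delta_1_delta delta_delta_1 ..

definition delta_const :: "'r \<Rightarrow> bool" where "delta_const c \<longleftrightarrow> (\<forall>j>0. \<delta> j c = 0)"

lemma delta_const_sigma: "delta_const c \<Longrightarrow> \<sigma> c = c"
  by (simp add: delta_const_def sigma_eq_delta_1[of c])

lemma delta_const_mult: "delta_const c \<Longrightarrow> \<delta> k (c * y) = c * \<delta> k y"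
  using delta_mult_gap[of k c y] delta_const_sigma[of c]
  by (cases "k = 0") (auto simp: delta_const_def funpow_fixed_point)

lemma delta_const_one: "delta_const 1"
  and delta_const_diff: "delta_const a \<Longrightarrow> delta_const b \<Longrightarrow> delta_const (a - b)"
  and delta_const_add: "delta_const a \<Longrightarrow> delta_const b \<Longrightarrow> delta_const (a + b)"
  and delta_const_mult_closed: "delta_const a \<Longrightarrow> delta_const b \<Longrightarrow> delta_const (a * b)"
  by (simp_all add: delta_const_def delta_one delta_diff delta_add delta_const_mult)

lemma delta_power_gap:
  assumes "0 < j" and gap: "\<And>i. 0 < i \<Longrightarrow> i < j \<Longrightarrow> \<delta> i c = 0" and "\<sigma> c = c"
  shows "\<delta> j (c ^ r) * c = of_nat r * c ^ r * \<delta> j c"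
proof (induction r)
  case (Suc r)
  have "\<delta> j (c ^ r * c) = \<delta> j (c ^ r) * c + (\<sigma> ^^ j) (c ^ r) * \<delta> j c"
    using assms(1) gap by (intro delta_mult_gap) auto
  then have "\<delta> j (c ^ Suc r) * c = \<delta> j (c ^ r) * c * c + c ^ r * \<delta> j c * c"
    by (simp only: power_Suc2 sigma_funpow_simps(7) funpow_fixed_point[of \<sigma> c, OF assms(3)]
        distrib_right)
  then show ?case unfolding Suc.IH by (simp add: algebra_simps)
qed (simp add: delta_one assms(1))

text \<open>Comparing \<open>\<delta>\<^sub>j (\<tau> q)\<close> with \<open>\<delta>\<^sub>j (q \<tau>)\<close> gives \<open>(q\<^sup>j - 1) \<tau> \<delta>\<^sub>j q = 0\<close>. If
  \<open>q\<^sup>j = 1\<close>, a relation \<open>q\<^sup>m = 1\<close> with \<open>m \<noteq> 0\<close> in \<open>C\<close> forces \<open>m \<delta>\<^sub>j q = \<delta>\<^sub>j 1 = 0\<close>.\<close>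
lemma delta_const_q: "delta_const (const q)"
  unfolding delta_const_def
proof (intro allI impI)
  fix j :: nat assume "0 < j"
  then show "\<delta> j (const q) = 0"
  proof (induction j rule: less_induct)
    case (less j)
    let ?c = "const q" and ?e = "\<delta> j (const q)"
    have gap: "\<And>i. 0 < i \<Longrightarrow> i < j \<Longrightarrow> \<delta> i ?c = 0" using less.IH by blast
    have "\<delta> j (tau * ?c) = \<delta> j tau * ?c + (\<sigma> ^^ j) tau * ?e"
      and "\<delta> j (?c * tau) = ?e * tau + ?c * \<delta> j tau"
      using delta_mult_gap[of j] less.prems gap by auto
    then have "const (q ^ j - 1) * (tau * ?e) = 0"
      by (simp add: sigma_funpow_tau const_simps algebra_simps)
    then have "q ^ j = 1 \<or> ?e = 0" using const_nonzero[of "q ^ j - 1"] tau_nonzero by auto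
    moreover
    { assume "q ^ j = 1"
      then obtain m where m: "0 < m" "q ^ m = 1" "of_nat m \<noteq> (0::'c)"
        using power_eq_1_imp_order_nonzero less.prems by blast
      have "\<delta> j (?c ^ m) * ?c = of_nat m * ?c ^ m * ?e"
        using less.prems gap by (intro delta_power_gap) auto
      moreover have "?c ^ m = 1" using m(2) const_simps(1) const_simps(7)[of q m] by simp
      ultimately have "const (of_nat m) * ?e = 0"
        using less.prems by (simp add: delta_one const_simps(9))
      then have "?e = 0" using const_nonzero[OF m(3)] by simp }
    ultimately show "?e = 0" by blast
  qed
qed

lemma delta_const_q_minus_1: "delta_const (const (q - 1))"
  using delta_const_diff[OF delta_const_q delta_const_one] by (simp add: const_simps)

lemma delta_1_tau: "\<delta> 1 tau = const (q - 1)"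
proof -
  have "tau * \<delta> 1 tau = \<sigma> tau - tau" using sigma_eq_delta_1[of tau] by simp
  also have "\<dots> = tau * const (q - 1)" by (simp add: sigma_tau const_simps algebra_simps)
  finally show ?thesis using tau_nonzero by simp
qed

lemma delta_tau_mult_expand:
  assumes "2 \<le> k" and high: "\<And>j. 2 \<le> j \<Longrightarrow> j < k \<Longrightarrow> \<delta> j tau = 0"
  shows "\<delta> k (tau * b) = \<delta> k tau * b + const (q - 1) * \<delta> (k - 1) b + const q ^ k * tau * \<delta> k b"
proof -
  obtain n where k: "k = Suc (Suc n)" using assms(1) by (metis add_2_eq_Suc le_Suc_ex)
  have "\<delta> k (tau * b) = (\<Sum>i\<le>n. (\<sigma> ^^ i) (\<delta> (k - i) tau) * \<delta> i b)
      + (\<sigma> ^^ Suc n) (\<delta> (k - Suc n) tau) * \<delta> (Suc n) b + (\<sigma> ^^ k) (\<delta> (k - k) tau) * \<delta> k b"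
    unfolding delta_mult by (simp only: k sum.atMost_Suc)
  moreover have "(\<Sum>i\<le>n. (\<sigma> ^^ i) (\<delta> (k - i) tau) * \<delta> i b) = \<delta> k tau * b"
  proof (subst sum_eq_single[of _ 0])
    fix i assume "i \<in> {..n}" "i \<noteq> 0"
    then show "(\<sigma> ^^ i) (\<delta> (k - i) tau) * \<delta> i b = 0"
      using high[of "k - i"] by (simp add: k sigma_funpow_simps)
  qed auto
  moreover have "k - Suc n = 1" "k - 1 = Suc n" by (simp_all add: k)
  ultimately show ?thesis by (simp add: delta_1_tau sigma_funpow_tau)
qed

text \<open>With \<open>c = \<delta>\<^sub>k \<tau>\<close>, the relation \<open>\<delta>\<^sub>1 \<circ> \<delta>\<^sub>k = \<delta>\<^sub>k \<circ> \<delta>\<^sub>1\<close> applied to \<open>\<tau>\<^sup>2\<close> gives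
  \<open>2 (q - 1) c = (1 + q) (q - 1) c\<close>.\<close>
lemma delta_tau_high_root_of_unity:
  assumes k: "2 \<le> k" and q_int: "(\<Sum>i<k. q ^ i) = 0"
    and high: "\<And>j. 2 \<le> j \<Longrightarrow> j < k \<Longrightarrow> \<delta> j tau = 0"
  shows "\<delta> k tau = 0"
proof -
  let ?c = "\<delta> k tau" and ?d = "\<delta> (k - 1) tau" and ?\<kappa> = "const (q - 1)"
  have "q ^ k = 1" using power_diff_1_eq[of q k] q_int by simp
  then have qk: "const q ^ k = 1" by (metis const_simps(1) const_simps(7))
  have "\<delta> 1 ?c = 0"
    using delta_1_delta_commute[of k tau] delta_const_q_minus_1 k
    by (simp add: delta_1_tau delta_const_def)
  then have sigma_c: "\<sigma> ?c = ?c" using sigma_eq_delta_1[of ?c] by simp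
  have "\<delta> 1 ?d = 0" using delta_1_delta[of "k - 1" tau] k q_int by (simp add: const_simps)
  have "\<delta> k (tau * tau) = ?c * tau + ?\<kappa> * ?d + tau * ?c"
    using delta_tau_mult_expand[OF k high, of tau] qk by (simp add: mult_ac)
  moreover have "\<delta> 1 (?c * tau) = ?\<kappa> * ?c" "\<delta> 1 (tau * ?c) = ?\<kappa> * ?c"
    using \<open>\<delta> 1 ?c = 0\<close> sigma_c by (simp_all add: delta_1_mult delta_1_tau mult.commute)
  moreover have "\<delta> 1 (?\<kappa> * ?d) = 0"
    using \<open>\<delta> 1 ?d = 0\<close> by (simp add: delta_const_mult[OF delta_const_q_minus_1])
  ultimately have "\<delta> 1 (\<delta> k (tau * tau)) = ?\<kappa> * ?c + ?\<kappa> * ?c"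
    by (simp only: delta_add add_0_right)
  have "\<delta> 1 (tau * tau) = ((1 + const q) * ?\<kappa>) * tau"
    by (simp add: delta_1_mult delta_1_tau sigma_tau algebra_simps)
  then have "\<delta> k (\<delta> 1 (tau * tau)) = (1 + const q) * ?\<kappa> * ?c"
    using delta_const_mult delta_const_mult_closed delta_const_add delta_const_one delta_const_q
      delta_const_q_minus_1 by simp
  with \<open>\<delta> 1 (\<delta> k (tau * tau)) = ?\<kappa> * ?c + ?\<kappa> * ?c\<close>
  have "const (1 - q) * (?\<kappa> * ?c) = 0"
    using delta_1_delta_commute[of k "tau * tau"] by (simp add: const_simps algebra_simps)
  then show ?thesis using const_nonzero q_neq_1 by auto
qed

lemma delta_tau_high: "2 \<le> k \<Longrightarrow> \<delta> k tau = 0"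
proof (induction k rule: less_induct)
  case (less k)
  have "const (\<Sum>i<k. q ^ i) * \<delta> k tau = 0"
    using delta_delta_1[of "k - 1" tau] delta_const_q_minus_1 less.prems
    by (simp add: delta_1_tau delta_const_def)
  then show ?case
    using delta_tau_high_root_of_unity[OF less.prems] less.IH const_nonzero by auto
qed

lemma delta_tau_mult:
  assumes "0 < k"
  shows "\<delta> k (tau * b) = const q ^ k * tau * \<delta> k b + const (q - 1) * \<delta> (k - 1) b"
proof (cases "k = 1")
  case True
  show ?thesis unfolding True by (simp add: delta_1_mult delta_1_tau sigma_tau)
next
  case False
  then show ?thesis using assms delta_tau_mult_expand[of k] delta_tau_high by simp
qed

lemma delta_sigma: "\<delta> k (\<sigma> a) = const q ^ k * \<sigma> (\<delta> k a)"
proof (cases "k = 0")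
  case False
  have "const (q - 1) * const (\<Sum>i<k. q ^ i) = const ((q - 1) * (\<Sum>i<k. q ^ i))"
    by (simp only: const_simps(3))
  also have "\<dots> = const q ^ k - 1" by (simp only: power_diff_1_eq[symmetric] const_simps(1,6,7))
  finally have geom: "const (q - 1) * const (\<Sum>i<k. q ^ i) = const q ^ k - 1" .
  have "\<delta> k (\<sigma> a) = \<delta> k a + const q ^ k * tau * \<delta> k (\<delta> 1 a) + const (q - 1) * \<delta> (k - 1) (\<delta> 1 a)"
    using False by (simp only: sigma_eq_delta_1[of a] delta_add delta_tau_mult add.assoc)
  also have "const (q - 1) * \<delta> (k - 1) (\<delta> 1 a) = (const q ^ k - 1) * \<delta> k a"
  proof -
    have "\<delta> (k - 1) (\<delta> 1 a) = const (\<Sum>i<k. q ^ i) * \<delta> k a"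
      using delta_delta_1[of "k - 1" a] False by simp
    then show ?thesis unfolding geom[symmetric] by (simp only: mult.assoc)
  qed
  also have "\<delta> k a + const q ^ k * tau * \<delta> k (\<delta> 1 a) + (const q ^ k - 1) * \<delta> k a
      = const q ^ k * (\<delta> k a + tau * \<delta> 1 (\<delta> k a))"
    by (simp add: delta_1_delta_commute algebra_simps)
  also have "\<dots> = const q ^ k * \<sigma> (\<delta> k a)" by (simp add: sigma_eq_delta_1[of "\<delta> k a"])
  finally show ?thesis .
qed simp

lemma delta_tau_power: "r \<le> k \<Longrightarrow> \<delta> k (tau ^ r) = (if k = r then const (q - 1) ^ r else 0)"
proof (induction r arbitrary: k)
  case 0
  then show ?case by (simp add: delta_one)
next
  case (Suc r)
  then show ?case
    using Suc.IH[of k] Suc.IH[of "k - 1"] by (auto simp: delta_tau_mult)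
qed

lemma delta_tau_power_leibniz_term:
  assumes "m \<le> N" "n \<le> N"
  shows "(\<sigma> ^^ m) (\<delta> (N - m) (tau ^ (N - n))) * \<delta> m (tau ^ n) = (if m = n then const (q - 1) ^ N else 0)"
proof (cases rule: linorder_cases[of m n])
  case less
  then show ?thesis using assms delta_tau_power[of "N - n" "N - m"] by (simp add: sigma_funpow_simps)
next
  case equal
  then show ?thesis
    using assms by (simp add: delta_tau_power sigma_funpow_simps power_add[symmetric])
next
  case greater
  then show ?thesis by (simp add: delta_tau_power)
qed

lemma delta_delta_mult:
  "\<delta> i (\<delta> j (x * y)) = (\<Sum>l\<le>i. \<Sum>m\<le>j.
     const q ^ (m * (i - l)) * (\<sigma> ^^ (l + m)) (\<delta> (i - l) (\<delta> (j - m) x)) * \<delta> l (\<delta> m y))"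
  by (rule twisted_leibniz_iterate[where A = UNIV])
    (simp_all add: sigma_hom delta_add delta_mult delta_sigma)

text \<open>A purely scalar identity, read off by expanding \<open>\<delta>\<^sub>i (\<delta>\<^sub>j (\<tau>\<^sup>i\<^sup>+\<^sup>j\<^sup>-\<^sup>n \<tau>\<^sup>n))\<close>
  in two ways: in the Leibniz expansion only the term \<open>\<delta>\<^sub>n (\<tau>\<^sup>n) = (q - 1)\<^sup>n\<close> survives.\<close>
lemma q_vandermonde:
  assumes "n \<le> i + j"
  shows "(\<Sum>l | l \<le> i \<and> l \<le> n \<and> n - l \<le> j.
      q ^ ((n - l) * (i - l)) * qbinom (i + j - n) (i - l) q * qbinom n l q) = qbinom (i + j) i q"
proof -
  define N where "N = i + j"
  have n: "n \<le> N" using assms by (simp add: N_def)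
  define a where "a = tau ^ (N - n)"
  define b where "b = tau ^ n"
  define g where "g m = (\<sigma> ^^ m) (\<delta> (N - m) a) * \<delta> m b" for m
  define w where "w l m = q ^ ((m - l) * (i - l)) * qbinom (N - m) (i - l) q * qbinom m l q" for l m
  have g: "m \<le> N \<Longrightarrow> g m = (if m = n then const (q - 1) ^ N else 0)" for m
    unfolding g_def a_def b_def by (rule delta_tau_power_leibniz_term[OF _ n])
  have collect: "(\<Sum>m\<le>N. const (c m) * g m) = const (c n) * const (q - 1) ^ N" for c
    using n by (subst sum_eq_single[of _ n]) (auto simp: g)
  have "\<delta> N (a * b) = (\<Sum>m\<le>N. const 1 * g m)" by (simp add: delta_mult g_def const_simps)
  then have "const (qbinom N i q) * const (q - 1) ^ N = \<delta> i (\<delta> j (a * b))"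
    using collect[of "\<lambda>_. 1"] by (simp add: N_def delta_delta const_simps)
  also have "\<dots> = (\<Sum>l\<le>i. \<Sum>m\<le>j. const (w l (l + m)) * g (l + m))"
    unfolding delta_delta_mult
  proof (intro sum.cong refl)
    fix l m assume "l \<in> {..i}" "m \<in> {..j}"
    then have "i - l + (j - m) = N - (l + m)" by (auto simp: N_def)
    then show "const q ^ (m * (i - l)) * (\<sigma> ^^ (l + m)) (\<delta> (i - l) (\<delta> (j - m) a)) * \<delta> l (\<delta> m b) =
        const (w l (l + m)) * g (l + m)"
      by (simp add: delta_delta w_def g_def const_simps sigma_funpow_simps power_mult mult_ac)
  qed
  also have "\<dots> = (\<Sum>m\<le>N. const (\<Sum>l | l \<le> i \<and> l \<le> m \<and> m - l \<le> j. w l m) * g m)"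
    unfolding sum_atMost_atMost_by_total_degree N_def[symmetric] const_simps(8) sum_distrib_right
    by (intro sum.cong refl) auto
  also have "\<dots> = const (\<Sum>l | l \<le> i \<and> l \<le> n \<and> n - l \<le> j. w l n) * const (q - 1) ^ N"
    by (rule collect)
  finally have "const (\<Sum>l | l \<le> i \<and> l \<le> n \<and> n - l \<le> j. w l n) = const (qbinom N i q)"
    using const_nonzero[of "q - 1"] q_neq_1 by simp
  then show ?thesis
    using const_nonzero[of "(\<Sum>l | l \<le> i \<and> l \<le> n \<and> n - l \<le> j. w l n) - qbinom N i q"]
    by (auto simp: const_simps(6) w_def N_def)
qed

end

section \<open>Twisted convolution\<close>

text \<open>\<open>twisted_conv s u v\<close> is the coefficient sequence of the product
  \<open>(\<Sum> v\<^sub>i T\<^sup>i) (\<Sum> u\<^sub>j T\<^sup>j)\<close> in the skew power series ring with \<open>T a = s(a) T\<close>.\<close>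
definition twisted_conv :: "('a \<Rightarrow> 'a) \<Rightarrow> (nat \<Rightarrow> 'a) \<Rightarrow> (nat \<Rightarrow> 'a) \<Rightarrow> nat \<Rightarrow> 'a::comm_ring_1" where
  "twisted_conv s u v k = (\<Sum>i\<le>k. (s ^^ i) (u (k - i)) * v i)"

lemma twisted_conv_assoc:
  fixes s :: "'a::comm_ring_1 \<Rightarrow> 'a"
  assumes "ring_hom_fun s"
  shows "twisted_conv s (twisted_conv s u v) w = twisted_conv s u (twisted_conv s v w)"
proof
  fix k
  note s_simps = ring_hom_fun_simps[OF ring_hom_fun_funpow[OF assms]]
  have "twisted_conv s (twisted_conv s u v) w k
      = (\<Sum>i\<le>k. \<Sum>j\<le>k - i. (s ^^ (i + j)) (u (k - i - j)) * (s ^^ i) (v j) * w i)"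
    by (simp add: twisted_conv_def s_simps sum_distrib_right funpow_add)
  also have "\<dots> = (\<Sum>n\<le>k. \<Sum>i\<le>n. (s ^^ (i + (n - i))) (u (k - i - (n - i))) * (s ^^ i) (v (n - i)) * w i)"
    by (rule sum_atMost_triangle)
  also have "\<dots> = (\<Sum>n\<le>k. \<Sum>i\<le>n. (s ^^ n) (u (k - n)) * ((s ^^ i) (v (n - i)) * w i))"
    by (intro sum.cong refl) (auto simp: mult.assoc)
  also have "\<dots> = twisted_conv s u (twisted_conv s v w) k"
    by (simp add: twisted_conv_def sum_distrib_left)
  finally show "twisted_conv s (twisted_conv s u v) w k = twisted_conv s u (twisted_conv s v w) k" .
qed

lemma twisted_conv_add_left:
  fixes s :: "'a::comm_ring_1 \<Rightarrow> 'a"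
  assumes "ring_hom_fun s"
  shows "twisted_conv s (\<lambda>k. u k + u' k) v k = twisted_conv s u v k + twisted_conv s u' v k"
  by (simp add: twisted_conv_def ring_hom_fun_simps[OF ring_hom_fun_funpow[OF assms]]
      distrib_right sum.distrib)

lemma twisted_conv_unit: "twisted_conv s u (\<lambda>k. if k = 0 then 1 else 0) = u"
proof
  fix k
  have "twisted_conv s u (\<lambda>k. if k = 0 then 1 else 0) k = (s ^^ 0) (u (k - 0)) * 1"
    unfolding twisted_conv_def by (subst sum_eq_single[of _ 0]) auto
  then show "twisted_conv s u (\<lambda>k. if k = 0 then 1 else 0) k = u k" by simp
qed

lemma twisted_conv_split_0:
  "twisted_conv s u v k = u k * v 0 + (\<Sum>i\<in>{1..k}. (s ^^ i) (u (k - i)) * v i)"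
  unfolding twisted_conv_def by (simp add: atMost_atLeast0 sum.atLeast_Suc_atMost One_nat_def)

lemma twisted_conv_cancel_right:
  fixes s :: "'a::idom \<Rightarrow> 'a"
  assumes "v 0 \<noteq> 0" and "twisted_conv s u v = twisted_conv s u' v"
  shows "u = u'"
proof
  fix k show "u k = u' k"
  proof (induction k rule: less_induct)
    case (less k)
    have "(\<Sum>i\<in>{1..k}. (s ^^ i) (u (k - i)) * v i) = (\<Sum>i\<in>{1..k}. (s ^^ i) (u' (k - i)) * v i)"
      using less by (intro sum.cong refl) auto
    moreover have "u k * v 0 + (\<Sum>i\<in>{1..k}. (s ^^ i) (u (k - i)) * v i)
        = u' k * v 0 + (\<Sum>i\<in>{1..k}. (s ^^ i) (u' (k - i)) * v i)"
      using fun_cong[OF assms(2), of k] unfolding twisted_conv_split_0 .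
    ultimately show ?case using assms(1) by simp
  qed
qed

declare sum.cong [fundef_cong]

function twisted_quot :: "('a::field \<Rightarrow> 'a) \<Rightarrow> (nat \<Rightarrow> 'a) \<Rightarrow> (nat \<Rightarrow> 'a) \<Rightarrow> nat \<Rightarrow> 'a" where
  "twisted_quot s b v k = (b k - (\<Sum>i\<in>{1..k}. (s ^^ i) (twisted_quot s b v (k - i)) * v i)) / v 0"
  by auto
termination by (relation "measure (\<lambda>(s, b, v, k). k)") auto

declare twisted_quot.simps [simp del]

lemma twisted_conv_twisted_quot: "v 0 \<noteq> 0 \<Longrightarrow> twisted_conv s (twisted_quot s b v) v = b"
  by (rule ext, unfold twisted_conv_split_0, subst twisted_quot.simps) simp

lemma twisted_conv_twist:
  fixes s :: "'a::comm_ring_1 \<Rightarrow> 'a"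
  assumes "ring_hom_fun s" and "s Q = Q"
  shows "twisted_conv s (\<lambda>k. Q ^ k * s (u k)) (\<lambda>k. Q ^ k * s (v k))
    = (\<lambda>k. Q ^ k * s (twisted_conv s u v k))"
proof
  fix k
  note s_simps = ring_hom_fun_simps[OF assms(1)]
  note s_pow_simps = ring_hom_fun_simps[OF ring_hom_fun_funpow[OF assms(1)]]
  have Q: "(s ^^ n) Q = Q" for n by (rule funpow_fixed_point[of s Q, OF assms(2)])
  have "Q ^ k * s (twisted_conv s u v k) = (\<Sum>i\<le>k. Q ^ k * (s ((s ^^ i) (u (k - i))) * s (v i)))"
    by (simp add: twisted_conv_def s_simps sum_distrib_left)
  also have "\<dots> = (\<Sum>i\<le>k. (s ^^ i) (Q ^ (k - i) * s (u (k - i))) * (Q ^ i * s (v i)))"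
  proof (intro sum.cong refl)
    fix i assume "i \<in> {..k}"
    then have "Q ^ k = Q ^ (k - i) * Q ^ i" by (simp flip: power_add)
    then show "Q ^ k * (s ((s ^^ i) (u (k - i))) * s (v i))
        = (s ^^ i) (Q ^ (k - i) * s (u (k - i))) * (Q ^ i * s (v i))"
      by (simp add: s_pow_simps Q funpow_swap1 mult_ac)
  qed
  also have "\<dots> = twisted_conv s (\<lambda>k. Q ^ k * s (u k)) (\<lambda>k. Q ^ k * s (v k)) k"
    by (simp add: twisted_conv_def)
  finally show "twisted_conv s (\<lambda>k. Q ^ k * s (u k)) (\<lambda>k. Q ^ k * s (v k)) k
      = Q ^ k * s (twisted_conv s u v k)" ..
qed

section \<open>Localization\<close>

lemma Fract_1_eq_0_iff [simp]: "Fract a 1 = 0 \<longleftrightarrow> a = 0"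
  by (simp add: Zero_fract_def eq_fract)

lemma ring_hom_fun_Fract_1: "ring_hom_fun (\<lambda>r::'a::idom. Fract r 1)"
  by (simp add: ring_hom_fun_def One_fract_def)

lemma loc_sigma_Fract:
  assumes "ring_aut f" and "s \<noteq> 0"
  shows "loc_sigma f (Fract a s) = Fract (f a) (f s)"
  unfolding loc_sigma_def
proof (rule someI2)
  fix y assume "\<exists>a' s'. s' \<noteq> 0 \<and> Fract a s = Fract a' s' \<and> y = Fract (f a') (f s')"
  then obtain a' s' where "s' \<noteq> 0" "Fract a s = Fract a' s'" "y = Fract (f a') (f s')" by blast
  moreover have "f a * f s' = f a' * f s"
    using calculation(1,2) assms ring_hom_fun_simps(3)[of f]
    by (metis eq_fract(1) ring_aut_def)
  ultimately show "y = Fract (f a) (f s)"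
    using assms ring_aut_nonzero[OF assms(1)] by (simp add: eq_fract)
qed (use assms(2) in blast)

lemma ring_hom_fun_loc_sigma:
  assumes "ring_aut f"
  shows "ring_hom_fun (loc_sigma f)"
proof -
  note f_simps = ring_hom_fun_simps[OF conjunct1[OF assms[unfolded ring_aut_def]]]
  have nz: "b \<noteq> 0 \<Longrightarrow> f b \<noteq> 0" for b by (rule ring_aut_nonzero[OF assms])
  show ?thesis unfolding ring_hom_fun_def
  proof (intro conjI allI)
    show "loc_sigma f 1 = 1"
      using loc_sigma_Fract[OF assms, of 1 1] by (simp add: f_simps One_fract_def)
  next
    fix x y :: "'a fract"
    show "loc_sigma f (x + y) = loc_sigma f x + loc_sigma f y"
      by (cases x, cases y) (simp add: loc_sigma_Fract[OF assms] nz f_simps)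
    show "loc_sigma f (x * y) = loc_sigma f x * loc_sigma f y"
      by (cases x, cases y) (simp add: loc_sigma_Fract[OF assms] nz f_simps)
  qed
qed

locale q_difference_localization = q_difference_ring q \<iota> \<sigma> \<delta>
  for q :: "'c::field" and \<iota> :: "'c ratfun \<Rightarrow> 'r::idom" and \<sigma> \<delta> +
  fixes S :: "'r set"
  assumes S_mult_closed: "mult_closed S" and zero_notin_S: "0 \<notin> S" and sigma_S: "\<sigma> ` S \<subseteq> S"
begin

lemma one_in_S: "1 \<in> S" and S_mult: "s \<in> S \<Longrightarrow> t \<in> S \<Longrightarrow> s * t \<in> S"
  and S_nonzero: "s \<in> S \<Longrightarrow> s \<noteq> 0" and sigma_in_S: "s \<in> S \<Longrightarrow> \<sigma> s \<in> S"
  using S_mult_closed zero_notin_S sigma_S by (auto simp: mult_closed_def)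

lemma loc_FractI: "s \<in> S \<Longrightarrow> Fract a s \<in> loc S"
  by (auto simp: loc_def)

lemma locE:
  assumes "x \<in> loc S"
  obtains a s where "s \<in> S" "x = Fract a s"
  using assms by (auto simp: loc_def)

lemma loc_add: "x \<in> loc S \<Longrightarrow> y \<in> loc S \<Longrightarrow> x + y \<in> loc S"
  and loc_mult: "x \<in> loc S \<Longrightarrow> y \<in> loc S \<Longrightarrow> x * y \<in> loc S"
  and loc_diff: "x \<in> loc S \<Longrightarrow> y \<in> loc S \<Longrightarrow> x - y \<in> loc S"
  and loc_divide: "x \<in> loc S \<Longrightarrow> s \<in> S \<Longrightarrow> x / Fract s 1 \<in> loc S"
  by (auto elim!: locE intro!: loc_FractI simp: S_nonzero S_mult)

lemma loc_Fract_1: "Fract a 1 \<in> loc S"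
  using one_in_S by (rule loc_FractI)

lemma loc_zero: "0 \<in> loc S"
  using loc_Fract_1[of 0] by (simp add: Zero_fract_def)

lemma loc_sum: "(\<And>i. i \<in> A \<Longrightarrow> f i \<in> loc S) \<Longrightarrow> sum f A \<in> loc S"
  by (induction A rule: infinite_finite_induct) (simp_all add: loc_zero loc_add)

abbreviation sigma_L :: "'r fract \<Rightarrow> 'r fract" where "sigma_L \<equiv> loc_sigma \<sigma>"

lemma sigma_L_hom: "ring_hom_fun sigma_L"
  by (rule ring_hom_fun_loc_sigma[OF sigma_aut])

lemmas sigma_L_funpow_simps = ring_hom_fun_simps[OF ring_hom_fun_funpow[OF sigma_L_hom]]

lemma sigma_L_Fract: "s \<noteq> 0 \<Longrightarrow> sigma_L (Fract a s) = Fract (\<sigma> a) (\<sigma> s)"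
  by (rule loc_sigma_Fract[OF sigma_aut])

lemma sigma_L_funpow_Fract_1: "(sigma_L ^^ n) (Fract r 1) = Fract ((\<sigma> ^^ n) r) 1"
  by (induction n) (simp_all add: sigma_L_Fract sigma_simps)

lemma sigma_L_loc: "x \<in> loc S \<Longrightarrow> sigma_L x \<in> loc S"
  by (auto elim!: locE intro!: loc_FractI simp: S_nonzero sigma_L_Fract sigma_in_S)

lemma sigma_L_funpow_loc: "x \<in> loc S \<Longrightarrow> (sigma_L ^^ n) x \<in> loc S"
  by (induction n) (simp_all add: sigma_L_loc)

definition loc_const :: "'c \<Rightarrow> 'r fract" where "loc_const c = Fract (const c) 1"

lemma loc_const_hom: "ring_hom_fun loc_const"
proof -
  have "loc_const = (\<lambda>r. Fract r 1) \<circ> const" by (simp add: fun_eq_iff loc_const_def)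
  then show ?thesis using ring_hom_fun_comp[OF ring_hom_fun_Fract_1 const_hom] by simp
qed

lemmas loc_const_simps = ring_hom_fun_simps[OF loc_const_hom]

lemma sigma_L_loc_const: "sigma_L (loc_const c) = loc_const c"
  by (simp add: loc_const_def sigma_L_Fract sigma_simps)

lemma sigma_L_funpow_loc_const [simp]: "(sigma_L ^^ n) (loc_const c) = loc_const c"
  by (simp add: funpow_fixed_point sigma_L_loc_const)

definition taylor :: "'r \<Rightarrow> nat \<Rightarrow> 'r fract" where "taylor a k = Fract (\<delta> k a) 1"

lemma taylor_0: "taylor a 0 = Fract a 1"
  by (simp add: taylor_def)

lemma taylor_loc: "taylor a k \<in> loc S"
  by (simp add: taylor_def loc_Fract_1)

lemma taylor_0_nonzero: "s \<in> S \<Longrightarrow> taylor s 0 \<noteq> 0"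
  by (simp add: taylor_0 S_nonzero eq_fract Zero_fract_def)

lemma taylor_mult: "taylor (a * b) = twisted_conv sigma_L (taylor a) (taylor b)"
  by (rule ext) (simp add: taylor_def twisted_conv_def delta_mult sigma_L_funpow_Fract_1
      ring_hom_fun_simps(8)[OF ring_hom_fun_Fract_1])

lemma taylor_mult_commute:
  "twisted_conv sigma_L (taylor a) (taylor b) = twisted_conv sigma_L (taylor b) (taylor a)"
  by (simp flip: taylor_mult add: mult.commute)

lemma taylor_one: "taylor 1 = (\<lambda>k. if k = 0 then 1 else 0)"
  by (rule ext) (simp add: taylor_def delta_one One_fract_def Zero_fract_def)

lemma taylor_sigma: "taylor (\<sigma> a) = (\<lambda>k. loc_const q ^ k * sigma_L (taylor a k))"
  by (rule ext) (simp add: taylor_def loc_const_def delta_sigma sigma_L_Fract sigma_simps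
      flip: ring_hom_fun_simps(7)[OF ring_hom_fun_Fract_1])

text \<open>Forced by the Leibniz rule applied to \<open>x s = a\<close> for \<open>x = a / s\<close>.\<close>
definition loc_delta :: "nat \<Rightarrow> 'r fract \<Rightarrow> 'r fract" where
  "loc_delta k x = (SOME u. \<exists>a s. s \<in> S \<and> x = Fract a s \<and> twisted_conv sigma_L u (taylor s) = taylor a) k"

text \<open>The defining equation holds for every representation \<open>a / s\<close>: if also \<open>x = a' / s'\<close>,
  then \<open>a s' = a' s\<close> yields \<open>(u \<star> taylor s) \<star> taylor s' = taylor a \<star> taylor s'\<close>, and
  \<open>taylor s'\<close> can be cancelled.\<close>
lemma loc_delta_conv:
  assumes "s \<in> S"
  shows "twisted_conv sigma_L (\<lambda>k. loc_delta k (Fract a s)) (taylor s) = taylor a"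
proof -
  let ?P = "\<lambda>u. \<exists>a' s'. s' \<in> S \<and> Fract a s = Fract a' s' \<and> twisted_conv sigma_L u (taylor s') = taylor a'"
  have "?P (twisted_quot sigma_L (taylor a) (taylor s))"
    using assms twisted_conv_twisted_quot taylor_0_nonzero by blast
  then have "?P (SOME u. ?P u)" by (rule someI[where P = ?P])
  moreover have u: "(\<lambda>k. loc_delta k (Fract a s)) = (SOME u. ?P u)"
    by (simp add: loc_delta_def fun_eq_iff)
  ultimately obtain a' s' where s': "s' \<in> S" "Fract a s = Fract a' s'"
    and conv_u: "twisted_conv sigma_L (\<lambda>k. loc_delta k (Fract a s)) (taylor s') = taylor a'"
    by auto
  have "a * s' = a' * s" using s' assms S_nonzero by (simp add: eq_fract)
  have assoc: "twisted_conv sigma_L (twisted_conv sigma_L u v) w = twisted_conv sigma_L u (twisted_conv sigma_L v w)"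
    for u v w by (rule twisted_conv_assoc[OF sigma_L_hom])
  have "twisted_conv sigma_L (twisted_conv sigma_L (\<lambda>k. loc_delta k (Fract a s)) (taylor s)) (taylor s')
      = twisted_conv sigma_L (twisted_conv sigma_L (\<lambda>k. loc_delta k (Fract a s)) (taylor s')) (taylor s)"
    by (simp only: assoc taylor_mult_commute)
  also have "\<dots> = taylor (a' * s)" by (simp only: conv_u taylor_mult)
  also have "\<dots> = twisted_conv sigma_L (taylor a) (taylor s')"
    by (simp only: taylor_mult[symmetric] \<open>a * s' = a' * s\<close>)
  finally show ?thesis by (rule twisted_conv_cancel_right[where v = "taylor s'", OF taylor_0_nonzero[OF s'(1)]])
qed

lemma loc_delta_unique:
  assumes "s \<in> S" and "twisted_conv sigma_L u (taylor s) = taylor a"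
  shows "u = (\<lambda>k. loc_delta k (Fract a s))"
proof (rule twisted_conv_cancel_right[where v = "taylor s", OF taylor_0_nonzero[OF assms(1)]])
  show "twisted_conv sigma_L u (taylor s) = twisted_conv sigma_L (\<lambda>k. loc_delta k (Fract a s)) (taylor s)"
    unfolding assms(2) loc_delta_conv[OF assms(1)] ..
qed

lemma loc_delta_Fract_1: "loc_delta k (Fract a 1) = Fract (\<delta> k a) 1"
proof -
  have "twisted_conv sigma_L (taylor a) (taylor 1) = taylor a"
    unfolding taylor_one by (rule twisted_conv_unit)
  from loc_delta_unique[OF one_in_S this] show ?thesis
    by (simp add: fun_eq_iff taylor_def)
qed

lemma twisted_quot_loc:
  assumes "s \<in> S"
  shows "twisted_quot sigma_L (taylor a) (taylor s) k \<in> loc S"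
proof (induction k rule: less_induct)
  case (less k)
  have "taylor a k - (\<Sum>i\<in>{1..k}. (sigma_L ^^ i) (twisted_quot sigma_L (taylor a) (taylor s) (k - i))
      * taylor s i) \<in> loc S"
    using less by (auto intro!: loc_diff loc_sum loc_mult sigma_L_funpow_loc taylor_loc)
  then show ?case
    using loc_divide[OF _ assms] by (subst twisted_quot.simps) (simp add: taylor_0)
qed

lemma loc_delta_loc: "x \<in> loc S \<Longrightarrow> loc_delta k x \<in> loc S"
  by (elim locE) (metis twisted_quot_loc loc_delta_unique taylor_0_nonzero twisted_conv_twisted_quot)

lemma loc_delta_0: "x \<in> loc S \<Longrightarrow> loc_delta 0 x = x"
proof (elim locE)
  fix a s assume s: "s \<in> S" and x: "x = Fract a s"
  have "loc_delta 0 x * Fract s 1 = Fract a 1"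
    using fun_cong[OF loc_delta_conv[OF s, of a], of 0] by (simp add: x twisted_conv_def taylor_0)
  moreover have "Fract s 1 \<noteq> 0" using s S_nonzero by simp
  ultimately show "loc_delta 0 x = x"
    using nonzero_mult_div_cancel_right[of "Fract s 1" "loc_delta 0 x"] by (simp add: x)
qed

lemma loc_delta_conv_mult:
  assumes "s \<in> S"
  shows "twisted_conv sigma_L (\<lambda>k. loc_delta k (Fract a s)) (taylor (s * t)) = taylor (a * t)"
  by (simp only: taylor_mult twisted_conv_assoc[OF sigma_L_hom, symmetric] loc_delta_conv[OF assms])

lemma loc_delta_add:
  assumes "x \<in> loc S" "y \<in> loc S"
  shows "loc_delta k (x + y) = loc_delta k x + loc_delta k y"
proof -
  obtain a s b t where s: "s \<in> S" "x = Fract a s" and t: "t \<in> S" "y = Fract b t"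
    using assms by (blast elim: locE)
  have "twisted_conv sigma_L (\<lambda>k. loc_delta k x + loc_delta k y) (taylor (s * t)) k
      = taylor (a * t + b * s) k" for k
    using loc_delta_conv_mult[OF s(1), of a t] loc_delta_conv_mult[OF t(1), of b s]
    by (simp add: twisted_conv_add_left[OF sigma_L_hom] mult.commute[of s t] s(2) t(2)
        taylor_def delta_add)
  then have "(\<lambda>k. loc_delta k x + loc_delta k y) = (\<lambda>k. loc_delta k (Fract (a * t + b * s) (s * t)))"
    by (intro loc_delta_unique S_mult s(1) t(1)) (simp add: fun_eq_iff)
  moreover have "x + y = Fract (a * t + b * s) (s * t)" using s t S_nonzero by simp
  ultimately show ?thesis by (simp add: fun_eq_iff)
qed

lemma loc_delta_mult:
  assumes "x \<in> loc S" "y \<in> loc S"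
  shows "loc_delta k (x * y) = (\<Sum>i\<le>k. (sigma_L ^^ i) (loc_delta (k - i) x) * loc_delta i y)"
proof -
  obtain a s b t where s: "s \<in> S" "x = Fract a s" and t: "t \<in> S" "y = Fract b t"
    using assms by (blast elim: locE)
  let ?u = "\<lambda>k. loc_delta k x" and ?v = "\<lambda>k. loc_delta k y"
  have "twisted_conv sigma_L (twisted_conv sigma_L ?u ?v) (taylor (s * t))
      = twisted_conv sigma_L ?u (taylor (s * b))"
    using loc_delta_conv_mult[OF t(1), of b s]
    by (simp add: twisted_conv_assoc[OF sigma_L_hom] mult.commute[of s t] mult.commute[of s b] t(2))
  also have "\<dots> = taylor (a * b)" using loc_delta_conv_mult[OF s(1)] by (simp add: s(2))
  finally have "twisted_conv sigma_L ?u ?v = (\<lambda>k. loc_delta k (Fract (a * b) (s * t)))"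
    by (rule loc_delta_unique[OF S_mult[OF s(1) t(1)]])
  moreover have "x * y = Fract (a * b) (s * t)" by (simp add: s t)
  ultimately show ?thesis by (simp add: fun_eq_iff twisted_conv_def)
qed

lemma loc_delta_sigma:
  assumes "x \<in> loc S"
  shows "loc_delta k (sigma_L x) = loc_const q ^ k * sigma_L (loc_delta k x)"
proof -
  obtain a s where s: "s \<in> S" "x = Fract a s" using assms by (blast elim: locE)
  have "twisted_conv sigma_L (\<lambda>k. loc_const q ^ k * sigma_L (loc_delta k x)) (taylor (\<sigma> s))
      = taylor (\<sigma> a)"
    using fun_cong[OF twisted_conv_twist[OF sigma_L_hom sigma_L_loc_const[of q], of "\<lambda>k. loc_delta k x" "taylor s"]]
      loc_delta_conv[OF s(1), of a]
    by (simp add: taylor_sigma s(2) fun_eq_iff)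
  from loc_delta_unique[OF sigma_in_S[OF s(1)] this]
  show ?thesis using s S_nonzero by (simp add: sigma_L_Fract fun_eq_iff)
qed

lemma loc_delta_1:
  assumes "x \<in> loc S"
  shows "loc_delta 1 x = loc_iota \<iota> (inverse (Fract [:q - 1:] 1 * tvar)) * (sigma_L x - x)"
proof -
  obtain a s where s: "s \<in> S" and x: "x = Fract a s" using assms by (blast elim: locE)
  let ?W = "loc_iota \<iota> (inverse (Fract [:q - 1:] 1 * tvar))"
  have "s \<noteq> 0" "\<sigma> s \<noteq> 0" using s S_nonzero sigma_in_S by auto
  have delta_1_Fract: "Fract (\<delta> 1 r) 1 = ?W * (Fract (\<sigma> r) 1 - Fract r 1)" for r
    by (simp add: delta_1_eq loc_iota_def)
  have "loc_delta 1 x * Fract s 1 + sigma_L x * Fract (\<delta> 1 s) 1 = Fract (\<delta> 1 a) 1"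
    using fun_cong[OF loc_delta_conv[OF s, of a], of 1] loc_delta_0[OF assms]
    by (simp add: x twisted_conv_def taylor_def One_nat_def)
  moreover have "sigma_L x * Fract (\<sigma> s) 1 = Fract (\<sigma> a) 1"
    using \<open>\<sigma> s \<noteq> 0\<close> \<open>s \<noteq> 0\<close> by (simp add: x sigma_L_Fract eq_fract)
  moreover have "x * Fract s 1 = Fract a 1" using \<open>s \<noteq> 0\<close> by (simp add: x eq_fract)
  moreover have "D * s' = W * (X - x) * s'"
    if "D * s' + X * (W * (t' - s')) = W * (b - a)" "X * t' = b" "x * s' = a"
    for D X W x s' t' a b :: "'r fract"
  proof -
    have "D * s' = W * (X * t' - x * s') - X * (W * (t' - s'))"
      using that by (simp add: algebra_simps)
    also have "\<dots> = W * (X - x) * s'" by (simp add: algebra_simps)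
    finally show ?thesis .
  qed
  ultimately have "loc_delta 1 x * Fract s 1 = ?W * (sigma_L x - x) * Fract s 1"
    unfolding delta_1_Fract by blast
  then show ?thesis using \<open>s \<noteq> 0\<close> by simp
qed

lemma loc_delta_delta_mult:
  assumes "x \<in> loc S" "y \<in> loc S"
  shows "loc_delta i (loc_delta j (x * y)) = (\<Sum>l\<le>i. \<Sum>m\<le>j. loc_const q ^ (m * (i - l)) *
    (sigma_L ^^ (l + m)) (loc_delta (i - l) (loc_delta (j - m) x)) * loc_delta l (loc_delta m y))"
  by (intro twisted_leibniz_iterate[where A = "loc S"])
    (simp_all add: assms sigma_L_hom sigma_L_loc_const loc_zero loc_add loc_mult sigma_L_loc
      loc_delta_loc loc_delta_add loc_delta_mult loc_delta_sigma)

lemma q_vandermonde_twisted_conv: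
  "(\<Sum>l\<le>i. \<Sum>m\<le>j. loc_const q ^ (m * (i - l)) *
      (sigma_L ^^ (l + m)) (loc_const (qbinom (i + j - (l + m)) (i - l) q) * u (i + j - (l + m))) *
      (loc_const (qbinom (l + m) l q) * v (l + m)))
    = loc_const (qbinom (i + j) i q) * twisted_conv sigma_L u v (i + j)"
proof -
  let ?P = "\<lambda>n l. l \<le> i \<and> l \<le> n \<and> n - l \<le> j"
  let ?w = "\<lambda>n l. q ^ ((n - l) * (i - l)) * qbinom (i + j - n) (i - l) q * qbinom n l q"
  have "(\<Sum>l\<le>i. \<Sum>m\<le>j. loc_const q ^ (m * (i - l)) *
      (sigma_L ^^ (l + m)) (loc_const (qbinom (i + j - (l + m)) (i - l) q) * u (i + j - (l + m))) *
      (loc_const (qbinom (l + m) l q) * v (l + m)))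
    = (\<Sum>n\<le>i + j. \<Sum>l | ?P n l. loc_const (?w n l) * ((sigma_L ^^ n) (u (i + j - n)) * v n))"
    unfolding sum_atMost_atMost_by_total_degree
    by (intro sum.cong refl) (auto simp: loc_const_simps sigma_L_funpow_simps power_mult mult_ac)
  also have "\<dots> = (\<Sum>n\<le>i + j. loc_const (qbinom (i + j) i q) * ((sigma_L ^^ n) (u (i + j - n)) * v n))"
    by (intro sum.cong refl)
      (simp add: q_vandermonde flip: sum_distrib_right loc_const_simps(8))
  finally show ?thesis by (simp add: twisted_conv_def sum_distrib_left)
qed

text \<open>Induction step of iterativity: expand \<open>\<delta>\<^sub>i (\<delta>\<^sub>j (x s)) = \<delta>\<^sub>i (\<delta>\<^sub>j a)\<close> for
  \<open>x = a / s\<close>; by induction all terms of the double Leibniz sum except the one with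
  \<open>\<delta>\<^sub>i (\<delta>\<^sub>j x)\<close> are known, and q-Vandermonde sums them up.\<close>
lemma loc_delta_delta_step:
  assumes s: "s \<in> S" and x: "x = Fract a s"
    and IH: "\<And>i' j'. i' + j' < i + j \<Longrightarrow>
      loc_delta i' (loc_delta j' x) = loc_const (qbinom (i' + j') i' q) * loc_delta (i' + j') x"
  shows "loc_delta i (loc_delta j x) = loc_const (qbinom (i + j) i q) * loc_delta (i + j) x"
proof -
  let ?N = "i + j" and ?u = "\<lambda>k. loc_delta k x"
  define F where "F l m = loc_const q ^ (m * (i - l)) *
    (sigma_L ^^ (l + m)) (loc_delta (i - l) (loc_delta (j - m) x)) * loc_delta l (loc_delta m (Fract s 1))"
    for l m
  define G where "G l m = loc_const q ^ (m * (i - l)) *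
    (sigma_L ^^ (l + m)) (loc_const (qbinom (?N - (l + m)) (i - l) q) * ?u (?N - (l + m))) *
    (loc_const (qbinom (l + m) l q) * taylor s (l + m))" for l m
  have x_loc: "x \<in> loc S" using s x by (simp add: loc_FractI)
  have "(\<Sum>l\<le>i. \<Sum>m\<le>j. F l m) = loc_delta i (loc_delta j (x * Fract s 1))"
    unfolding F_def by (rule loc_delta_delta_mult[symmetric, OF x_loc loc_Fract_1])
  also have "x * Fract s 1 = Fract a 1" using s S_nonzero by (simp add: x eq_fract)
  also have "loc_delta i (loc_delta j (Fract a 1)) = loc_const (qbinom ?N i q) * taylor a ?N"
    by (simp add: loc_delta_Fract_1 delta_delta taylor_def loc_const_def)
  also have "\<dots> = (\<Sum>l\<le>i. \<Sum>m\<le>j. G l m)"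
    using q_vandermonde_twisted_conv[of i j "\<lambda>k. loc_delta k x" "taylor s"]
    unfolding G_def loc_delta_conv[OF s, of a, folded x] by (rule sym)
  finally have sums: "(\<Sum>l\<le>i. \<Sum>m\<le>j. F l m) = (\<Sum>l\<le>i. \<Sum>m\<le>j. G l m)" .
  have "F l m = G l m" if "l \<le> i" "m \<le> j" "0 < l + m" for l m
  proof -
    have "i - l + (j - m) = ?N - (l + m)" "i - l + (j - m) < ?N" using that by auto
    then show ?thesis
      using IH[of "i - l" "j - m"]
      by (simp add: F_def G_def loc_delta_Fract_1 delta_delta taylor_def loc_const_def)
  qed
  then have "F 0 0 = G 0 0" by (intro double_sum_eq_imp_eq_at_0[OF sums]) auto
  then have "loc_delta i (loc_delta j x) * Fract s 1 = loc_const (qbinom ?N i q) * ?u ?N * Fract s 1"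
    by (simp add: F_def G_def loc_delta_Fract_1 taylor_0 loc_const_simps)
  then show ?thesis using s S_nonzero by simp
qed

lemma loc_delta_delta:
  assumes "x \<in> loc S"
  shows "loc_delta i (loc_delta j x) = loc_const (qbinom (i + j) i q) * loc_delta (i + j) x"
proof -
  obtain a s where s: "s \<in> S" and x: "x = Fract a s" using assms by (blast elim: locE)
  have "\<forall>i j. i + j = N \<longrightarrow>
      loc_delta i (loc_delta j x) = loc_const (qbinom (i + j) i q) * loc_delta (i + j) x" for N
    by (induction N rule: less_induct) (blast intro: loc_delta_delta_step[OF s x])
  then show ?thesis by blast
qed

lemma loc_delta_iter_qdiff_op: "iter_qdiff_op q (loc_iota \<iota>) sigma_L (loc S) loc_delta"
proof -
  have "loc_iota \<iota> (Fract [:c:] 1) = loc_const c" for c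
    by (simp add: loc_iota_def loc_const_def const_def)
  then show ?thesis
    unfolding iter_qdiff_op_def
    by (simp add: loc_delta_loc loc_delta_0 loc_delta_1 loc_delta_add loc_delta_mult loc_delta_delta)
qed

lemma loc_delta_unique_operator:
  assumes "iter_qdiff_op q (loc_iota \<iota>) sigma_L (loc S) \<delta>'"
    and "\<And>k a. \<delta>' k (Fract a 1) = Fract (\<delta> k a) 1" and "x \<in> loc S"
  shows "\<delta>' k x = loc_delta k x"
proof -
  obtain a s where s: "s \<in> S" and x: "x = Fract a s" using assms(3) by (blast elim: locE)
  have "x * Fract s 1 = Fract a 1" using s S_nonzero by (simp add: x eq_fract)
  moreover have "\<delta>' k (x * Fract s 1) = (\<Sum>i\<le>k. (sigma_L ^^ i) (\<delta>' (k - i) x) * \<delta>' i (Fract s 1))"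
    for k using assms(1,3) loc_Fract_1 unfolding iter_qdiff_op_def by blast
  ultimately have "twisted_conv sigma_L (\<lambda>k. \<delta>' k x) (taylor s) = taylor a"
    using assms(2) by (simp add: fun_eq_iff twisted_conv_def taylor_def)
  from loc_delta_unique[OF s this] show ?thesis by (simp add: x fun_eq_iff)
qed

end

theorem proposition2p19:
  fixes q :: "'c::field"
    and \<iota> :: "'c ratfun \<Rightarrow> 'r::idom"
    and \<sigma> :: "'r \<Rightarrow> 'r"
    and \<delta> :: "nat \<Rightarrow> 'r \<Rightarrow> 'r"
    and S :: "'r set"
  assumes "alg_closed TYPE('c)"
    and "q \<noteq> 1" and "q \<noteq> 0"
    and "iter_qdiff_ring q \<iota> \<sigma> \<delta>"
    and "mult_closed S" and "0 \<notin> S" and "\<sigma> ` S \<subseteq> S"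
  shows "\<exists>\<delta>L :: nat \<Rightarrow> 'r fract \<Rightarrow> 'r fract.
           iter_qdiff_op q (loc_iota \<iota>) (loc_sigma \<sigma>) (loc S) \<delta>L
         \<and> (\<forall>k a. \<delta>L k (Fract a 1) = Fract (\<delta> k a) 1)
         \<and> (\<forall>\<delta>'. iter_qdiff_op q (loc_iota \<iota>) (loc_sigma \<sigma>) (loc S) \<delta>'
                  \<and> (\<forall>k a. \<delta>' k (Fract a 1) = Fract (\<delta> k a) 1)
                  \<longrightarrow> (\<forall>k. \<forall>x\<in>loc S. \<delta>' k x = \<delta>L k x))"
proof -
  interpret q_difference_localization q \<iota> \<sigma> \<delta> S
    using assms by unfold_locales auto
  show ?thesis
    using loc_delta_iter_qdiff_op loc_delta_Fract_1 loc_delta_unique_operator by blast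
qed

end
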